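(* The maps $\operatorname{st}:\mathbf{PP}[I]\to\mathbf{\Sigma}^*[I]$ and $\operatorname{st}:\mathbf{wPP}[I]\to\mathbf{w\Sigma}^*[I]$ defined on basis elements by $$\operatorname{st}(p)=\sum_{l\text{ prelinear extension of }p} l,\qquad \operatorname{st}(w,p)=\sum_{(v,l)\text{ weighted prelinear extension of }(w,p)}(v,l)$$ are morphisms of Hopf monoids.
   Context: A preposet on a finite set $I$ is a reflexive transitive relation $\le$; write $x\sim y$ if $x\le y$ and $y\le x$, and $x<y$ if $x\le y$ and $y\not\le x$; $|q|$ is the number of $\sim$-classes. A total preposet (total preorder) is identified with the ordered set partition $F_1|\cdots|F_k$ of its classes, listed increasingly. A prelinear extension of a preposet $q$ is a total preposet $l$ on $I$ such that $x\le_q y\Rightarrow x\le_l y$ and $x<_q y\Rightarrow x<_l y$ (so each class of $q$ lies in a class of $l$). A weighted preposet $(w,q)$ assigns a real weight to each class of $q$; a weighted prelinear extension $(v,l)$ of it is a prelinear extension $l$ with $v(L)=\sum_{Q\subseteq L}w(Q)$ for each class $L$ of $l$ (sum over classes $Q$ of $q$). $S\subseteq I$ is a lower ideal of $q$ if $y\in S$, $x\le_q y$ imply $x\in S$. $\mathbf{PP}[I]$ (resp. $\mathbf{wPP}[I]$) is the vector space with basis the (weighted) preposets on $I$; it is a Hopf monoid with product the disjoint union (weights carried along) and coproduct $\Delta_{S,T}(q)=q|_S\otimes q|_T$ if $S$ is a lower ideal of $q$ and $0$ otherwise (restricting weights). An ordered set partition of $I$ is a sequence $F_1|\cdots|F_k$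 of nonempty disjoint blocks with union $I$; $F|_S$ is obtained from $(F_1\cap S)|\cdots|(F_k\cap S)$ by deleting empty blocks; $H$ on $S\sqcup T$ is a quasi-shuffle of $F$ on $S$ and $G$ on $T$ if $H|_S=F$, $H|_T=G$. $\mathbf{\Sigma}^*[I]$ has basis the ordered set partitions of $I$, product $F\cdot G=\sum H$ over quasi-shuffles, and coproduct $\Delta_{S,T}(F_1|\cdots|F_k)=(F_1|\cdots|F_j)\otimes(F_{j+1}|\cdots|F_k)$ if $S=F_1\sqcup\cdots\sqcup F_j$ for some $j$, and $0$ otherwise. $\mathbf{w\Sigma}^*$ is the weighted analogue: weighted ordered set partitions, quasi-shuffles in which a merged block $F_a\sqcup G_b$ gets weight $u(F_a)+v(G_b)$ and other blocks keep their weights, and the same deconcatenation coproduct with restricted weights. *)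

theory Defs
  imports Complex_Main
begin

text \<open>An element of a vector space with basis indexed by type 'b over the
field 'k is represented by its coefficient function 'b => 'k (finitely supported).\<close>

definition supp :: "('b \<Rightarrow> 'k::zero) \<Rightarrow> 'b set" where
  "supp v = {b. v b \<noteq> 0}"

definition delta :: "'b \<Rightarrow> 'b \<Rightarrow> 'k::{zero,one}" where
  "delta b = (\<lambda>c. if c = b then 1 else 0)"

definition lin :: "('b \<Rightarrow> 'c \<Rightarrow> 'k::comm_ring_1) \<Rightarrow> ('b \<Rightarrow> 'k) \<Rightarrow> 'c \<Rightarrow> 'k" where
  "lin f v = (\<lambda>c. \<Sum>b\<in>supp v. v b * f b c)"

definition lin2 :: "('a \<Rightarrow> 'b \<Rightarrow> 'c \<Rightarrow> 'k::comm_ring_1) \<Rightarrow> ('a \<Rightarrow> 'k) \<Rightarrow> ('b \<Rightarrow> 'k) \<Rightarrow> 'c \<Rightarrow> 'k" where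
  "lin2 f u v = (\<lambda>c. \<Sum>a\<in>supp u. \<Sum>b\<in>supp v. u a * v b * f a b c)"

text \<open>Elementary tensor u (x) v, basis of the tensor product = pairs of basis elements.\<close>
definition tens :: "('a \<Rightarrow> 'k::times) \<Rightarrow> ('b \<Rightarrow> 'k) \<Rightarrow> 'a \<times> 'b \<Rightarrow> 'k" where
  "tens u v = (\<lambda>(a, b). u a * v b)"

definition preposet :: "'a set \<Rightarrow> ('a \<times> 'a) set \<Rightarrow> bool" where
  "preposet I q \<longleftrightarrow> q \<subseteq> I \<times> I \<and> (\<forall>x\<in>I. (x, x) \<in> q) \<and> trans q"

definition strict_part :: "('a \<times> 'a) set \<Rightarrow> ('a \<times> 'a) set" where
  "strict_part r = {(x, y). (x, y) \<in> r \<and> (y, x) \<notin> r}"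

definition pclass :: "('a \<times> 'a) set \<Rightarrow> 'a \<Rightarrow> 'a set" where
  "pclass q x = {y. (x, y) \<in> q \<and> (y, x) \<in> q}"

definition classes :: "'a set \<Rightarrow> ('a \<times> 'a) set \<Rightarrow> 'a set set" where
  "classes I q = pclass q ` I"

definition lower_ideal :: "('a \<times> 'a) set \<Rightarrow> 'a set \<Rightarrow> bool" where
  "lower_ideal q S \<longleftrightarrow> (\<forall>x y. y \<in> S \<longrightarrow> (x, y) \<in> q \<longrightarrow> x \<in> S)"

definition restr :: "('a \<times> 'a) set \<Rightarrow> 'a set \<Rightarrow> ('a \<times> 'a) set" where
  "restr q S = q \<inter> (S \<times> S)"

definition osp :: "'a set \<Rightarrow> 'a set list \<Rightarrow> bool" where
  "osp I F \<longleftrightarrow> (\<forall>B\<in>set F. B \<noteq> {}) \<and>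
     (\<forall>i<length F. \<forall>j<length F. i \<noteq> j \<longrightarrow> F ! i \<inter> F ! j = {}) \<and> \<Union>(set F) = I"

text \<open>The total preposet whose ordered set partition is F.\<close>
definition trel :: "'a set list \<Rightarrow> ('a \<times> 'a) set" where
  "trel F = {(x, y). \<exists>i j. i \<le> j \<and> j < length F \<and> x \<in> F ! i \<and> y \<in> F ! j}"

definition orestr :: "'a set list \<Rightarrow> 'a set \<Rightarrow> 'a set list" where
  "orestr F S = filter (\<lambda>B. B \<noteq> {}) (map (\<lambda>B. B \<inter> S) F)"

definition qshuffle :: "'a set \<Rightarrow> 'a set \<Rightarrow> 'a set list \<Rightarrow> 'a set list \<Rightarrow> 'a set list \<Rightarrow> bool" where
  "qshuffle S T F G H \<longleftrightarrow> osp (S \<union> T) H \<and> orestr H S = F \<and> orestr H T = G"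

definition prelin_ext :: "'a set \<Rightarrow> ('a \<times> 'a) set \<Rightarrow> 'a set list \<Rightarrow> bool" where
  "prelin_ext I q F \<longleftrightarrow> osp I F \<and> q \<subseteq> trel F \<and> strict_part q \<subseteq> strict_part (trel F)"

text \<open>Coproduct of PP on a basis element, an element of PP[S] (x) PP[T].\<close>
definition ppcop :: "'a set \<Rightarrow> 'a set \<Rightarrow> ('a \<times> 'a) set \<Rightarrow> (('a \<times> 'a) set \<times> ('a \<times> 'a) set) \<Rightarrow> 'k::{zero,one}" where
  "ppcop S T q = (if lower_ideal q S then delta (restr q S, restr q T) else (\<lambda>_. 0))"

text \<open>Product of Sigma* on basis elements (quasi-shuffle product).\<close>
definition sigmul :: "'a set \<Rightarrow> 'a set \<Rightarrow> 'a set list \<Rightarrow> 'a set list \<Rightarrow> 'a set list \<Rightarrow> 'k::{zero,one}" where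
  "sigmul S T F G = (\<lambda>H. if qshuffle S T F G H then 1 else 0)"

text \<open>Coproduct (deconcatenation) of Sigma* on a basis element.\<close>
definition sigcop :: "'a set \<Rightarrow> 'a set \<Rightarrow> 'a set list \<Rightarrow> ('a set list \<times> 'a set list) \<Rightarrow> 'k::{zero,one}" where
  "sigcop S T F = (\<lambda>(G, H). if F = G @ H \<and> \<Union>(set G) = S \<and> \<Union>(set H) = T then 1 else 0)"

definition st :: "'a set \<Rightarrow> ('a \<times> 'a) set \<Rightarrow> 'a set list \<Rightarrow> 'k::{zero,one}" where
  "st I p = (\<lambda>F. if prelin_ext I p F then 1 else 0)"

text \<open>Weighted preposet (w, q): w gives the weight of each class; normalised to be 0
on sets that are not classes, so that each weighted preposet has a unique representation.\<close>
definition wpreposet :: "'a set \<Rightarrow> ('a set \<Rightarrow> real) \<times> ('a \<times> 'a) set \<Rightarrow> bool" where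
  "wpreposet I wq \<longleftrightarrow> preposet I (snd wq) \<and> (\<forall>C. C \<notin> classes I (snd wq) \<longrightarrow> fst wq C = 0)"

definition wres :: "('a set \<Rightarrow> real) \<Rightarrow> 'a set \<Rightarrow> 'a set \<Rightarrow> real" where
  "wres w S = (\<lambda>C. if C \<subseteq> S then w C else 0)"

definition wppcop :: "'a set \<Rightarrow> 'a set \<Rightarrow> ('a set \<Rightarrow> real) \<times> ('a \<times> 'a) set
    \<Rightarrow> ((('a set \<Rightarrow> real) \<times> ('a \<times> 'a) set) \<times> (('a set \<Rightarrow> real) \<times> ('a \<times> 'a) set)) \<Rightarrow> 'k::{zero,one}" where
  "wppcop S T wq = (if lower_ideal (snd wq) S
     then delta ((wres (fst wq) S, restr (snd wq) S), (wres (fst wq) T, restr (snd wq) T))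
     else (\<lambda>_. 0))"

text \<open>Weighted ordered set partitions: lists of (block, weight).\<close>
definition wt :: "('a set \<times> real) list \<Rightarrow> 'a set \<Rightarrow> real" where
  "wt F X = sum_list (map snd (filter (\<lambda>(A, a). A = X) F))"

definition wqshuffle :: "'a set \<Rightarrow> 'a set \<Rightarrow> ('a set \<times> real) list \<Rightarrow> ('a set \<times> real) list
    \<Rightarrow> ('a set \<times> real) list \<Rightarrow> bool" where
  "wqshuffle S T F G H \<longleftrightarrow> qshuffle S T (map fst F) (map fst G) (map fst H) \<and>
     (\<forall>(B, c)\<in>set H. c = wt F (B \<inter> S) + wt G (B \<inter> T))"

definition wsigmul :: "'a set \<Rightarrow> 'a set \<Rightarrow> ('a set \<times> real) list \<Rightarrow> ('a set \<times> real) list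
    \<Rightarrow> ('a set \<times> real) list \<Rightarrow> 'k::{zero,one}" where
  "wsigmul S T F G = (\<lambda>H. if wqshuffle S T F G H then 1 else 0)"

definition wsigcop :: "'a set \<Rightarrow> 'a set \<Rightarrow> ('a set \<times> real) list
    \<Rightarrow> (('a set \<times> real) list \<times> ('a set \<times> real) list) \<Rightarrow> 'k::{zero,one}" where
  "wsigcop S T F = (\<lambda>(G, H). if F = G @ H \<and> \<Union>(fst ` set G) = S \<and> \<Union>(fst ` set H) = T then 1 else 0)"

definition wprelin_ext :: "'a set \<Rightarrow> ('a set \<Rightarrow> real) \<times> ('a \<times> 'a) set \<Rightarrow> ('a set \<times> real) list \<Rightarrow> bool" where
  "wprelin_ext I wq H \<longleftrightarrow> prelin_ext I (snd wq) (map fst H) \<and>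
     (\<forall>(L, c)\<in>set H. c = (\<Sum>Q\<in>{Q\<in>classes I (snd wq). Q \<subseteq> L}. fst wq Q))"

definition wst :: "'a set \<Rightarrow> ('a set \<Rightarrow> real) \<times> ('a \<times> 'a) set \<Rightarrow> ('a set \<times> real) list \<Rightarrow> 'k::{zero,one}" where
  "wst I wq = (\<lambda>H. if wprelin_ext I wq H then 1 else 0)"

text \<open>Relabelling of weights along a bijection sigma : I -> J.\<close>
definition wmap :: "('a \<Rightarrow> 'b) \<Rightarrow> 'a set \<Rightarrow> ('a set \<Rightarrow> real) \<Rightarrow> 'b set \<Rightarrow> real" where
  "wmap \<sigma> I w = (\<lambda>C. if C \<subseteq> \<sigma> ` I then w (I \<inter> \<sigma> -` C) else 0)"

end

theory Submission
  imports Defs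
begin

(* st sends a preposet to the indicator function of its finite set of prelinear extensions, so
   every axiom becomes a statement about these sets.  A total preposet H on S \<union> T extends p \<union> q
   iff its restrictions to S and T extend p and q, and the only quasi-shuffle of those
   restrictions equal to H is H itself, so the product counts each extension of p \<union> q once.
   A concatenation G @ H with blocks covering S and T extends p iff S is a lower ideal and G, H
   extend the restrictions of p.  In the weighted case the weight of each block is forced (the
   total weight of the classes inside it), so weighted extensions are the unweighted ones with
   these weights attached; the forced weights commute with relabelling, add up under
   quasi-shuffles, and are preserved by restriction to a lower ideal or its complement. *)

lemma supp_if_one_zero [simp]: "supp (\<lambda>x. if P x then (1::'k::zero_neq_one) else 0) = {x. P x}"
  by (auto simp: supp_def)

lemma supp_delta: "supp (delta x :: _ \<Rightarrow> 'k::zero_neq_one) = {x}"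
  by (auto simp: supp_def delta_def)

lemma lin_delta: "lin f (delta x :: _ \<Rightarrow> 'k::comm_ring_1) = f x"
  by (simp add: lin_def supp_delta delta_def)

lemma lin_zero: "lin f (\<lambda>_. 0 :: 'k::comm_ring_1) = (\<lambda>_. 0)"
  by (simp add: lin_def supp_def)

lemma lin_if_one_zero:
  "lin f (\<lambda>x. if P x then (1::'k::comm_ring_1) else 0) = (\<lambda>c. \<Sum>b\<in>{x. P x}. f b c)"
  by (auto simp: lin_def intro!: sum.cong)

lemma lin2_if_one_zero:
  "lin2 f (\<lambda>x. if P x then (1::'k::comm_ring_1) else 0) (\<lambda>x. if Q x then 1 else 0)
     = (\<lambda>c. \<Sum>a\<in>{x. P x}. \<Sum>b\<in>{x. Q x}. f a b c)"
  by (auto simp: lin2_def intro!: sum.cong)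

lemma lin_delta_inj_on:
  assumes fin: "finite {x. P x}" and inj: "inj_on g {x. P x}"
  shows "lin (\<lambda>b. delta (g b)) (\<lambda>x. if P x then (1::'k::comm_ring_1) else 0)
           = (\<lambda>c. if c \<in> g ` {x. P x} then 1 else 0)"
proof
  fix c
  show "lin (\<lambda>b. delta (g b)) (\<lambda>x. if P x then (1::'k) else 0) c = (if c \<in> g ` {x. P x} then 1 else 0)"
  proof (cases "c \<in> g ` {x. P x}")
    case True
    then obtain b0 where b0: "P b0" "c = g b0" by auto
    have "lin (\<lambda>b. delta (g b)) (\<lambda>x. if P x then (1::'k) else 0) c
        = (\<Sum>b\<in>{x. P x}. if b = b0 then 1 else 0)"
      unfolding lin_if_one_zero delta_def using inj b0 by (intro sum.cong) (auto simp: inj_on_def)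
    also have "\<dots> = 1" using fin b0 by (simp add: sum.delta)
    finally show ?thesis using True by simp
  next
    case False
    then show ?thesis unfolding lin_if_one_zero delta_def by (auto intro!: sum.neutral)
  qed
qed

lemma sum_if_eq_and_one_zero:
  "finite A \<Longrightarrow> (\<Sum>x\<in>A. if x = a \<and> P then (1::'k::comm_ring_1) else 0) = (if a \<in> A \<and> P then 1 else 0)"
  by (simp add: sum.delta flip: if_if_eq_conj)

section \<open>Ordered set partitions\<close>

fun nonempty_disjoint :: "'a set list \<Rightarrow> bool" where
  "nonempty_disjoint [] = True"
| "nonempty_disjoint (B # F) \<longleftrightarrow> B \<noteq> {} \<and> B \<inter> \<Union>(set F) = {} \<and> nonempty_disjoint F"

lemma pairwise_disjoint_nth_Cons:
  "(\<forall>i<length (B # F). \<forall>j<length (B # F). i \<noteq> j \<longrightarrow> (B # F) ! i \<inter> (B # F) ! j = {}) \<longleftrightarrow>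
   B \<inter> \<Union>(set F) = {} \<and> (\<forall>i<length F. \<forall>j<length F. i \<noteq> j \<longrightarrow> F ! i \<inter> F ! j = {})"
proof -
  have "B \<inter> \<Union>(set F) = {} \<longleftrightarrow> (\<forall>j<length F. B \<inter> F ! j = {})"
    by (fastforce simp: in_set_conv_nth)
  then show ?thesis
    by (simp add: All_less_Suc2 Int_commute imp_conjR all_conj_distrib)
qed

lemma osp_iff: "osp I F \<longleftrightarrow> nonempty_disjoint F \<and> \<Union>(set F) = I"
proof (induction F arbitrary: I)
  case Nil
  then show ?case by (auto simp: osp_def)
next
  case (Cons B F)
  have "osp I (B # F) \<longleftrightarrow> B \<noteq> {} \<and> B \<inter> \<Union>(set F) = {} \<and> osp (\<Union>(set F)) F \<and> \<Union>(set (B # F)) = I"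
    unfolding osp_def pairwise_disjoint_nth_Cons by auto
  then show ?case using Cons.IH[of "\<Union>(set F)"] by auto
qed

lemma nonempty_disjoint_distinct: "nonempty_disjoint F \<Longrightarrow> distinct F"
  by (induction F) auto

lemma nonempty_disjoint_append:
  "nonempty_disjoint (G @ H) \<longleftrightarrow> nonempty_disjoint G \<and> nonempty_disjoint H \<and> \<Union>(set G) \<inter> \<Union>(set H) = {}"
  by (induction G) auto

lemma nonempty_disjoint_map_image:
  "inj_on \<sigma> I \<Longrightarrow> \<Union>(set F) \<subseteq> I \<Longrightarrow> nonempty_disjoint (map ((`) \<sigma>) F) \<longleftrightarrow> nonempty_disjoint F"
proof (induction F)
  case (Cons B F)
  have "\<sigma> ` B \<inter> \<sigma> ` \<Union>(set F) = \<sigma> ` (B \<inter> \<Union>(set F))"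
    using inj_on_image_Int[OF Cons.prems(1), of B "\<Union>(set F)"] Cons.prems(2) by auto
  then show ?case using Cons by (simp add: image_Union[symmetric])
qed simp

lemma finite_osp: "finite I \<Longrightarrow> finite {F. osp I F}"
  by (rule finite_subset[OF _ finite_subset_distinct[of "Pow I"]])
    (auto simp: osp_iff nonempty_disjoint_distinct)

lemma trel_Nil [simp]: "trel [] = {}"
  by (simp add: trel_def)

lemma trel_Cons: "trel (B # F) = B \<times> \<Union>(set (B # F)) \<union> trel F"
proof (intro subset_antisym subrelI)
  fix x y assume "(x, y) \<in> trel (B # F)"
  then obtain i j where ij: "i \<le> j" "j < length (B # F)" "x \<in> (B # F) ! i" "y \<in> (B # F) ! j"
    by (auto simp: trel_def)
  show "(x, y) \<in> B \<times> \<Union>(set (B # F)) \<union> trel F"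
  proof (cases i)
    case 0
    then show ?thesis using ij nth_mem[OF ij(2)] by auto
  next
    case (Suc i')
    then obtain j' where "j = Suc j'" using ij by (cases j) auto
    then show ?thesis using ij Suc unfolding trel_def by auto
  qed
next
  fix x y assume "(x, y) \<in> B \<times> \<Union>(set (B # F)) \<union> trel F"
  then show "(x, y) \<in> trel (B # F)"
  proof
    assume "(x, y) \<in> B \<times> \<Union>(set (B # F))"
    then obtain C where C: "C \<in> set (B # F)" "y \<in> C" "x \<in> B" by blast
    then obtain j where "j < length (B # F)" "(B # F) ! j = C" by (metis in_set_conv_nth)
    with C show ?thesis unfolding trel_def by (intro CollectI case_prodI exI[of _ 0] exI[of _ j]) auto
  next
    assume "(x, y) \<in> trel F"
    then obtain i j where "i \<le> j" "j < length F" "x \<in> F ! i" "y \<in> F ! j"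
      by (auto simp: trel_def)
    then show ?thesis unfolding trel_def by (intro CollectI case_prodI exI[of _ "Suc i"] exI[of _ "Suc j"]) auto
  qed
qed

lemma trel_append: "trel (F @ G) = trel F \<union> trel G \<union> \<Union>(set F) \<times> \<Union>(set G)"
  by (induction F) (auto simp: trel_Cons)

lemma trel_subset: "trel F \<subseteq> \<Union>(set F) \<times> \<Union>(set F)"
  by (induction F) (auto simp: trel_Cons)

lemma trel_map_image: "trel (map ((`) \<sigma>) F) = map_prod \<sigma> \<sigma> ` trel F"
  by (induction F) (auto simp: trel_Cons)

lemma orestr_Nil [simp]: "orestr [] S = []"
  by (simp add: orestr_def)

lemma orestr_Cons: "orestr (B # F) S = (if B \<inter> S = {} then orestr F S else (B \<inter> S) # orestr F S)"
  by (simp add: orestr_def)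

lemma set_orestr: "set (orestr F S) = (\<lambda>B. B \<inter> S) ` set F - {{}}"
  by (auto simp: orestr_def)

lemma Union_orestr: "\<Union>(set (orestr F S)) = \<Union>(set F) \<inter> S"
  by (auto simp: set_orestr)

lemma nonempty_disjoint_orestr: "nonempty_disjoint F \<Longrightarrow> nonempty_disjoint (orestr F S)"
  by (induction F) (auto simp: orestr_Cons Union_orestr)

lemma trel_orestr: "trel (orestr F S) = trel F \<inter> S \<times> S"
  by (induction F) (auto simp: orestr_def trel_Cons Union_orestr)

lemma strict_part_eq_diff_converse: "strict_part r = r - r\<inverse>"
  by (auto simp: strict_part_def)

lemma strict_part_Int_Times: "strict_part (r \<inter> S \<times> S) = strict_part r \<inter> S \<times> S"
  by (auto simp: strict_part_def)

lemma strict_part_Un_disjoint: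
  "p \<subseteq> S \<times> S \<Longrightarrow> q \<subseteq> T \<times> T \<Longrightarrow> S \<inter> T = {} \<Longrightarrow> strict_part (p \<union> q) = strict_part p \<union> strict_part q"
  by (auto simp: strict_part_def)

lemma strict_part_Un_Times:
  "A \<subseteq> S \<times> S \<Longrightarrow> B \<subseteq> T \<times> T \<Longrightarrow> S \<inter> T = {} \<Longrightarrow>
   strict_part (A \<union> B \<union> S \<times> T) = strict_part A \<union> strict_part B \<union> S \<times> T"
  by (auto simp: strict_part_def)

lemma inj_on_image_subset_iff:
  "inj_on f C \<Longrightarrow> A \<subseteq> C \<Longrightarrow> B \<subseteq> C \<Longrightarrow> f ` A \<subseteq> f ` B \<longleftrightarrow> A \<subseteq> B"
  by (auto simp: inj_on_def) blast

lemma map_prod_image_mem_iff: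
  "inj_on \<sigma> I \<Longrightarrow> p \<subseteq> I \<times> I \<Longrightarrow> x \<in> I \<Longrightarrow> y \<in> I \<Longrightarrow>
   (\<sigma> x, \<sigma> y) \<in> map_prod \<sigma> \<sigma> ` p \<longleftrightarrow> (x, y) \<in> p"
  using inj_on_image_mem_iff[OF map_prod_inj_on, of \<sigma> I \<sigma> I "(x, y)" p] by simp

lemma strict_part_map_prod_image:
  assumes inj: "inj_on \<sigma> I" and r: "r \<subseteq> I \<times> I"
  shows "strict_part (map_prod \<sigma> \<sigma> ` r) = map_prod \<sigma> \<sigma> ` strict_part r"
proof -
  have "(map_prod \<sigma> \<sigma> ` r)\<inverse> = map_prod \<sigma> \<sigma> ` r\<inverse>"
    by auto
  moreover have "r - r\<inverse> \<subseteq> I \<times> I" "r\<inverse> \<subseteq> I \<times> I"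
    using r by auto
  ultimately show ?thesis
    unfolding strict_part_eq_diff_converse
    by (simp add: inj_on_image_set_diff[OF map_prod_inj_on[OF inj inj]])
qed

section \<open>Prelinear extensions\<close>

lemma prelin_ext_Union: "prelin_ext I p F \<Longrightarrow> \<Union>(set F) = I"
  by (simp add: prelin_ext_def osp_iff)

lemma finite_prelin_ext: "finite I \<Longrightarrow> finite {F. prelin_ext I p F}"
  by (rule finite_subset[OF _ finite_osp]) (auto simp: prelin_ext_def)

lemma prelin_ext_empty_iff: "prelin_ext {} {} F \<longleftrightarrow> F = []"
proof
  assume "prelin_ext {} {} F"
  then have "nonempty_disjoint F" "\<Union>(set F) = {}"
    by (simp_all add: prelin_ext_def osp_iff)
  then show "F = []" by (cases F) auto
qed (simp add: prelin_ext_def osp_def strict_part_def)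

lemma prelin_ext_map_image_iff:
  assumes inj: "inj_on \<sigma> I" and F: "\<Union>(set F) \<subseteq> I" and p: "p \<subseteq> I \<times> I"
  shows "prelin_ext (\<sigma> ` I) (map_prod \<sigma> \<sigma> ` p) (map ((`) \<sigma>) F) \<longleftrightarrow> prelin_ext I p F"
proof -
  have inj2: "inj_on (map_prod \<sigma> \<sigma>) (I \<times> I)"
    using map_prod_inj_on[OF inj inj] .
  have t: "trel F \<subseteq> I \<times> I"
    using trel_subset[of F] F by blast
  have s: "strict_part p \<subseteq> I \<times> I" "strict_part (trel F) \<subseteq> I \<times> I"
    using p t by (auto simp: strict_part_def)
  have "osp (\<sigma> ` I) (map ((`) \<sigma>) F) \<longleftrightarrow> osp I F"
    using nonempty_disjoint_map_image[OF inj F] inj_on_image_eq_iff[OF inj F subset_refl]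
    by (simp add: osp_iff image_Union[symmetric])
  moreover have "map_prod \<sigma> \<sigma> ` p \<subseteq> trel (map ((`) \<sigma>) F) \<longleftrightarrow> p \<subseteq> trel F"
    by (simp add: trel_map_image inj_on_image_subset_iff[OF inj2 p t])
  moreover have "strict_part (map_prod \<sigma> \<sigma> ` p) \<subseteq> strict_part (trel (map ((`) \<sigma>) F))
      \<longleftrightarrow> strict_part p \<subseteq> strict_part (trel F)"
    by (simp add: trel_map_image strict_part_map_prod_image[OF inj p]
        strict_part_map_prod_image[OF inj t] inj_on_image_subset_iff[OF inj2 s])
  ultimately show ?thesis
    by (simp add: prelin_ext_def)
qed

lemma inj_on_map_image_prelin_ext:
  assumes inj: "inj_on \<sigma> I"
  shows "inj_on (map ((`) \<sigma>)) {F. prelin_ext I p F}"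
proof (rule inj_onI)
  fix F G assume FG: "F \<in> {F. prelin_ext I p F}" "G \<in> {F. prelin_ext I p F}" "map ((`) \<sigma>) F = map ((`) \<sigma>) G"
  have "inj_on ((`) \<sigma>) (set F \<union> set G)"
    by (rule inj_on_subset[OF inj_on_image_Pow[OF inj]]) (use FG prelin_ext_Union in auto)
  then show "F = G"
    using FG(3) inj_on_map_eq_map by blast
qed

lemma prelin_ext_transport:
  assumes bij: "bij_betw \<sigma> I J" and pre: "preposet I p"
  shows "{F'. prelin_ext J (map_prod \<sigma> \<sigma> ` p) F'} = map ((`) \<sigma>) ` {F. prelin_ext I p F}"
proof -
  have inj: "inj_on \<sigma> I" and J: "J = \<sigma> ` I"
    using bij by (auto simp: bij_betw_def)
  have p: "p \<subseteq> I \<times> I"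
    using pre by (simp add: preposet_def)
  show ?thesis
  proof (intro subset_antisym subsetI)
    fix F' assume "F' \<in> {F'. prelin_ext J (map_prod \<sigma> \<sigma> ` p) F'}"
    then have F': "prelin_ext J (map_prod \<sigma> \<sigma> ` p) F'"
      by simp
    define F where "F = map (\<lambda>B. I \<inter> \<sigma> -` B) F'"
    have "\<Union>(set F') \<subseteq> \<sigma> ` I"
      using prelin_ext_Union[OF F'] J by auto
    then have m: "map ((`) \<sigma>) F = F'"
      unfolding F_def map_map by (intro map_idI) auto
    have FI: "\<Union>(set F) \<subseteq> I"
      by (auto simp: F_def)
    have "prelin_ext I p F"
      using F' m J prelin_ext_map_image_iff[OF inj FI p] by simp
    with m show "F' \<in> map ((`) \<sigma>) ` {F. prelin_ext I p F}"
      by blast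
  next
    fix F' assume "F' \<in> map ((`) \<sigma>) ` {F. prelin_ext I p F}"
    then obtain F where F: "prelin_ext I p F" "F' = map ((`) \<sigma>) F"
      by auto
    then show "F' \<in> {F'. prelin_ext J (map_prod \<sigma> \<sigma> ` p) F'}"
      using prelin_ext_map_image_iff[OF inj _ p] prelin_ext_Union[OF F(1)] J by simp
  qed
qed

lemma prelin_ext_Un_iff:
  assumes H: "osp (S \<union> T) H" and p: "p \<subseteq> S \<times> S" and q: "q \<subseteq> T \<times> T" and d: "S \<inter> T = {}"
  shows "prelin_ext (S \<union> T) (p \<union> q) H \<longleftrightarrow> prelin_ext S p (orestr H S) \<and> prelin_ext T q (orestr H T)"
proof -
  have "osp S (orestr H S)" "osp T (orestr H T)"
    using H by (auto simp: osp_iff nonempty_disjoint_orestr Union_orestr)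
  moreover have "strict_part p \<subseteq> S \<times> S" "strict_part q \<subseteq> T \<times> T"
    using p q by (auto simp: strict_part_def)
  ultimately show ?thesis
    unfolding prelin_ext_def trel_orestr strict_part_Int_Times strict_part_Un_disjoint[OF p q d]
    using H p q by blast
qed

lemma sum_qshuffle_prelin_ext:
  assumes fS: "finite S" and fT: "finite T" and d: "S \<inter> T = {}" and p: "p \<subseteq> S \<times> S" and q: "q \<subseteq> T \<times> T"
  shows "(\<Sum>F\<in>{F. prelin_ext S p F}. \<Sum>G\<in>{G. prelin_ext T q G}.
            if qshuffle S T F G H then (1::'k::comm_ring_1) else 0)
       = (if prelin_ext (S \<union> T) (p \<union> q) H then 1 else 0)"
proof (cases "osp (S \<union> T) H")
  case False
  then show ?thesis by (simp add: qshuffle_def prelin_ext_def)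
next
  case True
  let ?A = "{F. prelin_ext S p F}" and ?B = "{G. prelin_ext T q G}"
  have "(\<Sum>F\<in>?A. \<Sum>G\<in>?B. if qshuffle S T F G H then (1::'k) else 0)
      = (\<Sum>F\<in>?A. if F = orestr H S then (\<Sum>G\<in>?B. if G = orestr H T then 1 else 0) else 0)"
    using True by (intro sum.cong refl) (auto simp: qshuffle_def intro!: sum.cong)
  also have "\<dots> = (if orestr H S \<in> ?A \<and> orestr H T \<in> ?B then 1 else 0)"
    using finite_prelin_ext[OF fS] finite_prelin_ext[OF fT] by (simp add: sum.delta)
  also have "\<dots> = (if prelin_ext (S \<union> T) (p \<union> q) H then 1 else 0)"
    using prelin_ext_Un_iff[OF True p q d] by simp
  finally show ?thesis .
qed

lemma prelin_ext_append_iff: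
  assumes li: "lower_ideal p S" and p: "p \<subseteq> (S \<union> T) \<times> (S \<union> T)" and d: "S \<inter> T = {}"
  shows "(prelin_ext (S \<union> T) p (G @ H) \<and> \<Union>(set G) = S \<and> \<Union>(set H) = T) \<longleftrightarrow>
         prelin_ext S (restr p S) G \<and> prelin_ext T (restr p T) H"
proof (cases "\<Union>(set G) = S \<and> \<Union>(set H) = T")
  case False
  then show ?thesis by (auto simp: prelin_ext_def osp_iff)
next
  case True
  have p3: "p \<subseteq> S \<times> S \<union> T \<times> T \<union> S \<times> T"
  proof (rule subrelI)
    fix x y assume "(x, y) \<in> p"
    then show "(x, y) \<in> S \<times> S \<union> T \<times> T \<union> S \<times> T"
      using li p d unfolding lower_ideal_def by blast
  qed
  have tG: "trel G \<subseteq> S \<times> S" and tH: "trel H \<subseteq> T \<times> T"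
    using trel_subset[of G] trel_subset[of H] True by auto
  have tr: "trel (G @ H) = trel G \<union> trel H \<union> S \<times> T"
    using True by (simp add: trel_append)
  have "osp (S \<union> T) (G @ H) \<longleftrightarrow> osp S G \<and> osp T H"
    using True d by (auto simp: osp_iff nonempty_disjoint_append)
  moreover have "p \<subseteq> trel (G @ H) \<longleftrightarrow> p \<inter> S \<times> S \<subseteq> trel G \<and> p \<inter> T \<times> T \<subseteq> trel H"
    unfolding tr using p3 tG tH d by blast
  moreover have "strict_part p \<subseteq> strict_part (trel (G @ H)) \<longleftrightarrow>
      strict_part p \<inter> S \<times> S \<subseteq> strict_part (trel G) \<and> strict_part p \<inter> T \<times> T \<subseteq> strict_part (trel H)"
  proof -
    have "strict_part (trel G) \<subseteq> S \<times> S" "strict_part (trel H) \<subseteq> T \<times> T" "strict_part p \<subseteq> p"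
      using tG tH by (auto simp: strict_part_def)
    then show ?thesis
      unfolding tr strict_part_Un_Times[OF tG tH d] using p3 d by blast
  qed
  ultimately show ?thesis
    using True unfolding prelin_ext_def restr_def strict_part_Int_Times by blast
qed

lemma not_prelin_ext_append:
  assumes "\<not> lower_ideal p S" and "p \<subseteq> (S \<union> T) \<times> (S \<union> T)" and "S \<inter> T = {}"
  shows "\<not> (prelin_ext (S \<union> T) p (G @ H) \<and> \<Union>(set G) = S \<and> \<Union>(set H) = T)"
proof
  assume A: "prelin_ext (S \<union> T) p (G @ H) \<and> \<Union>(set G) = S \<and> \<Union>(set H) = T"
  obtain x y where xy: "y \<in> S" "(x, y) \<in> p" "x \<notin> S"
    using assms(1) by (auto simp: lower_ideal_def)
  then have "(x, y) \<in> trel G \<union> trel H \<union> \<Union>(set G) \<times> \<Union>(set H)"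
    using A by (auto simp: prelin_ext_def trel_append)
  then show False
    using trel_subset[of G] trel_subset[of H] A xy assms(2,3) by auto
qed

section \<open>The morphism st\<close>

lemma st_transport:
  assumes "finite I" and bij: "bij_betw \<sigma> I J" and pre: "preposet I p"
  shows "(st J (map_prod \<sigma> \<sigma> ` p) :: _ \<Rightarrow> 'k::field) = lin (\<lambda>F. delta (map ((`) \<sigma>) F)) (st I p)"
proof -
  have "inj_on \<sigma> I"
    using bij by (simp add: bij_betw_def)
  then show ?thesis
    unfolding st_def
    by (subst lin_delta_inj_on[OF finite_prelin_ext[OF \<open>finite I\<close>] inj_on_map_image_prelin_ext])
      (simp_all add: prelin_ext_transport[OF bij pre, symmetric])
qed

lemma st_empty: "(st {} {} :: 'a set list \<Rightarrow> 'k::{zero,one}) = delta []"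
  by (rule ext) (simp add: st_def delta_def prelin_ext_empty_iff)

lemma st_Un:
  assumes "finite S" "finite T" "S \<inter> T = {}" and pS: "preposet S p" and pT: "preposet T q"
  shows "(st (S \<union> T) (p \<union> q) :: _ \<Rightarrow> 'k::field) = lin2 (sigmul S T) (st S p) (st T q)"
proof -
  have p: "p \<subseteq> S \<times> S" and q: "q \<subseteq> T \<times> T"
    using pS pT by (auto simp: preposet_def)
  show ?thesis
    unfolding st_def lin2_if_one_zero sigmul_def
    by (simp add: fun_eq_iff sum_qshuffle_prelin_ext[OF assms(1-3) p q])
qed

lemma st_coproduct:
  assumes fS: "finite S" and fT: "finite T" and d: "S \<inter> T = {}" and pre: "preposet (S \<union> T) p"
  shows "(lin (sigcop S T) (st (S \<union> T) p) :: _ \<Rightarrow> 'k::field)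
       = lin (\<lambda>(a, b). tens (st S a) (st T b)) (ppcop S T p)"
proof
  fix GH :: "'a set list \<times> 'a set list"
  obtain G H where GH: "GH = (G, H)" by (cases GH)
  have p: "p \<subseteq> (S \<union> T) \<times> (S \<union> T)"
    using pre by (simp add: preposet_def)
  have "lin (sigcop S T) (st (S \<union> T) p) (G, H)
      = (\<Sum>F\<in>{F. prelin_ext (S \<union> T) p F}.
           if F = G @ H \<and> (\<Union>(set G) = S \<and> \<Union>(set H) = T) then (1::'k) else 0)"
    unfolding st_def lin_if_one_zero sigcop_def by simp
  also have "\<dots> = (if prelin_ext (S \<union> T) p (G @ H) \<and> \<Union>(set G) = S \<and> \<Union>(set H) = T then 1 else 0)"
    using finite_prelin_ext[of "S \<union> T" p] fS fT by (simp add: sum_if_eq_and_one_zero)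
  also have "\<dots> = lin (\<lambda>(a, b). tens (st S a) (st T b)) (ppcop S T p) (G, H)"
    using prelin_ext_append_iff[OF _ p d, of G H] not_prelin_ext_append[OF _ p d, of G H]
    by (cases "lower_ideal p S") (simp_all add: ppcop_def lin_delta lin_zero tens_def st_def)
  finally show "(lin (sigcop S T) (st (S \<union> T) p) GH :: 'k)
      = lin (\<lambda>(a, b). tens (st S a) (st T b)) (ppcop S T p) GH"
    using GH by simp
qed

section \<open>Weighted prelinear extensions\<close>

definition block_weight :: "'a set \<Rightarrow> ('a set \<Rightarrow> real) \<Rightarrow> ('a \<times> 'a) set \<Rightarrow> 'a set \<Rightarrow> real" where
  "block_weight I w q L = (\<Sum>Q\<in>{Q\<in>classes I q. Q \<subseteq> L}. w Q)"

definition with_weights :: "('a set \<Rightarrow> real) \<Rightarrow> 'a set list \<Rightarrow> ('a set \<times> real) list" where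
  "with_weights f F = map (\<lambda>L. (L, f L)) F"

lemma map_fst_with_weights [simp]: "map fst (with_weights f F) = F"
  by (induction F) (auto simp: with_weights_def)

lemma inj_on_with_weights: "inj_on (with_weights f) A"
  by (rule inj_onI) (metis map_fst_with_weights)

lemma all_weights_eq_iff: "(\<forall>(L, c)\<in>set H. c = f L) \<longleftrightarrow> H = with_weights f (map fst H)"
  by (induction H) (auto simp: with_weights_def)

lemma wprelin_ext_block_weight:
  "wprelin_ext I (w, q) H \<longleftrightarrow> prelin_ext I q (map fst H) \<and> (\<forall>(L, c)\<in>set H. c = block_weight I w q L)"
  by (simp add: wprelin_ext_def block_weight_def)

lemma wprelin_ext_iff:
  "wprelin_ext I (w, q) H \<longleftrightarrow> prelin_ext I q (map fst H) \<and> H = with_weights (block_weight I w q) (map fst H)"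
  by (simp add: wprelin_ext_block_weight all_weights_eq_iff)

lemma wprelin_ext_eq_image:
  "{H. wprelin_ext I (w, q) H} = with_weights (block_weight I w q) ` {F. prelin_ext I q F}"
  by (auto simp: wprelin_ext_iff)

lemma finite_wprelin_ext: "finite I \<Longrightarrow> finite {H. wprelin_ext I (w, q) H}"
  unfolding wprelin_ext_eq_image by (rule finite_imageI[OF finite_prelin_ext])

lemma wt_with_weights: "distinct F \<Longrightarrow> wt (with_weights f F) X = (if X \<in> set F then f X else 0)"
  by (induction F) (auto simp: wt_def with_weights_def)

lemma classes_subset: "p \<subseteq> I \<times> I \<Longrightarrow> Q \<in> classes I p \<Longrightarrow> Q \<subseteq> I"
  by (auto simp: classes_def pclass_def)

lemma pclass_map_prod_image:
  assumes inj: "inj_on \<sigma> I" and p: "p \<subseteq> I \<times> I" and x: "x \<in> I"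
  shows "pclass (map_prod \<sigma> \<sigma> ` p) (\<sigma> x) = \<sigma> ` pclass p x"
proof (intro subset_antisym subsetI)
  fix z assume "z \<in> pclass (map_prod \<sigma> \<sigma> ` p) (\<sigma> x)"
  then have "z \<in> \<sigma> ` I" and z: "(\<sigma> x, z) \<in> map_prod \<sigma> \<sigma> ` p" "(z, \<sigma> x) \<in> map_prod \<sigma> \<sigma> ` p"
    using p by (auto simp: pclass_def)
  then obtain y where "y \<in> I" "z = \<sigma> y"
    by auto
  then show "z \<in> \<sigma> ` pclass p x"
    using z map_prod_image_mem_iff[OF inj p] x by (auto simp: pclass_def)
next
  fix z assume "z \<in> \<sigma> ` pclass p x"
  then obtain y where "z = \<sigma> y" "(x, y) \<in> p" "(y, x) \<in> p"
    by (auto simp: pclass_def)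
  then show "z \<in> pclass (map_prod \<sigma> \<sigma> ` p) (\<sigma> x)"
    by (auto simp: pclass_def)
qed

lemma classes_map_prod_image:
  assumes inj: "inj_on \<sigma> I" and p: "p \<subseteq> I \<times> I"
  shows "classes (\<sigma> ` I) (map_prod \<sigma> \<sigma> ` p) = (`) \<sigma> ` classes I p"
  unfolding classes_def image_image using pclass_map_prod_image[OF inj p] by (intro image_cong) auto

lemma block_weight_map_image:
  assumes inj: "inj_on \<sigma> I" and p: "p \<subseteq> I \<times> I" and L: "L \<subseteq> I"
  shows "block_weight (\<sigma> ` I) (wmap \<sigma> I w) (map_prod \<sigma> \<sigma> ` p) (\<sigma> ` L) = block_weight I w p L"
proof -
  let ?C = "{Q \<in> classes I p. Q \<subseteq> L}"
  have CI: "Q \<subseteq> I" if "Q \<in> classes I p" for Q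
    using classes_subset[OF p that] .
  have inj_image: "inj_on ((`) \<sigma>) ?C"
    by (rule inj_on_subset[OF inj_on_image_Pow[OF inj]]) (use CI in auto)
  have "{Q \<in> (`) \<sigma> ` classes I p. Q \<subseteq> \<sigma> ` L} = (`) \<sigma> ` ?C"
    using inj_on_image_subset_iff[OF inj CI L] by blast
  moreover have "wmap \<sigma> I w (\<sigma> ` Q) = w Q" if "Q \<in> classes I p" for Q
  proof -
    have "I \<inter> \<sigma> -` (\<sigma> ` Q) = Q"
      using CI[OF that] inj by (auto simp: inj_on_def)
    then show ?thesis
      by (simp add: wmap_def image_mono CI[OF that])
  qed
  ultimately show ?thesis
    unfolding block_weight_def classes_map_prod_image[OF inj p] by (simp add: sum.reindex[OF inj_image])
qed

lemma block_weight_empty: "preposet I q \<Longrightarrow> block_weight I w q {} = 0"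
  by (auto simp: block_weight_def classes_def pclass_def preposet_def intro!: sum.neutral)

lemma pclass_Un_disjoint:
  "p \<subseteq> S \<times> S \<Longrightarrow> q \<subseteq> T \<times> T \<Longrightarrow> S \<inter> T = {} \<Longrightarrow> x \<in> S \<Longrightarrow> pclass (p \<union> q) x = pclass p x"
  by (auto simp: pclass_def)

lemma classes_Un_disjoint:
  assumes p: "p \<subseteq> S \<times> S" and q: "q \<subseteq> T \<times> T" and d: "S \<inter> T = {}"
  shows "classes (S \<union> T) (p \<union> q) = classes S p \<union> classes T q"
proof -
  have "pclass (p \<union> q) ` S = pclass p ` S"
    using pclass_Un_disjoint[OF p q d] by (intro image_cong) auto
  moreover have "pclass (p \<union> q) ` T = pclass q ` T"
    using pclass_Un_disjoint[OF q p] d by (intro image_cong) (auto simp: Un_commute Int_commute)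
  ultimately show ?thesis
    unfolding classes_def image_Un by simp
qed

lemma block_weight_Un_disjoint:
  assumes fS: "finite S" and fT: "finite T" and d: "S \<inter> T = {}"
    and wS: "wpreposet S (w, p)" and wT: "wpreposet T (u, q)"
  shows "block_weight (S \<union> T) (\<lambda>C. w C + u C) (p \<union> q) B
       = block_weight S w p (B \<inter> S) + block_weight T u q (B \<inter> T)"
proof -
  have p: "p \<subseteq> S \<times> S" and q: "q \<subseteq> T \<times> T"
    using wS wT by (auto simp: wpreposet_def preposet_def)
  let ?X = "{Q \<in> classes S p \<union> classes T q. Q \<subseteq> B}"
  have fX: "finite ?X"
    using fS fT by (auto simp: classes_def)
  have "(\<Sum>Q\<in>?X. w Q) = (\<Sum>Q\<in>{Q\<in>classes S p. Q \<subseteq> B \<inter> S}. w Q)"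
    using classes_subset[OF p] wS by (intro sum.mono_neutral_right[OF fX]) (auto simp: wpreposet_def)
  moreover have "(\<Sum>Q\<in>?X. u Q) = (\<Sum>Q\<in>{Q\<in>classes T q. Q \<subseteq> B \<inter> T}. u Q)"
    using classes_subset[OF q] wT by (intro sum.mono_neutral_right[OF fX]) (auto simp: wpreposet_def)
  ultimately show ?thesis
    unfolding block_weight_def classes_Un_disjoint[OF p q d] by (simp add: sum.distrib)
qed

lemma wt_with_block_weight_orestr:
  assumes pre: "preposet S p" and F: "prelin_ext S p (orestr H S)" and B: "B \<in> set H"
  shows "wt (with_weights (block_weight S w p) (orestr H S)) (B \<inter> S) = block_weight S w p (B \<inter> S)"
proof -
  have "distinct (orestr H S)"
    using F by (simp add: prelin_ext_def osp_iff nonempty_disjoint_distinct)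
  moreover have "B \<inter> S \<in> set (orestr H S) \<or> B \<inter> S = {}"
    using B by (auto simp: set_orestr)
  ultimately show ?thesis
    by (auto simp: wt_with_weights block_weight_empty[OF pre])
qed

lemma wqshuffle_with_block_weight:
  assumes fS: "finite S" and fT: "finite T" and d: "S \<inter> T = {}"
    and wS: "wpreposet S (w, p)" and wT: "wpreposet T (u, q)"
    and F: "prelin_ext S p F" and G: "prelin_ext T q G"
  shows "wqshuffle S T (with_weights (block_weight S w p) F) (with_weights (block_weight T u q) G) H
     \<longleftrightarrow> qshuffle S T F G (map fst H)
         \<and> H = with_weights (block_weight (S \<union> T) (\<lambda>C. w C + u C) (p \<union> q)) (map fst H)"
proof (cases "qshuffle S T F G (map fst H)")
  case True
  then have FH: "F = orestr (map fst H) S" and GH: "G = orestr (map fst H) T"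
    by (simp_all add: qshuffle_def)
  have "wt (with_weights (block_weight S w p) F) (B \<inter> S) + wt (with_weights (block_weight T u q) G) (B \<inter> T)
      = block_weight (S \<union> T) (\<lambda>C. w C + u C) (p \<union> q) B" if "(B, c) \<in> set H" for B c
  proof -
    have B: "B \<in> set (map fst H)"
      using that by force
    have "preposet S p" "preposet T q"
      using wS wT by (simp_all add: wpreposet_def)
    then show ?thesis
      using F G B unfolding FH GH
      by (simp add: wt_with_block_weight_orestr block_weight_Un_disjoint[OF fS fT d wS wT])
  qed
  then have "(\<forall>(B, c)\<in>set H. c = wt (with_weights (block_weight S w p) F) (B \<inter> S)
                                  + wt (with_weights (block_weight T u q) G) (B \<inter> T))
      \<longleftrightarrow> (\<forall>(B, c)\<in>set H. c = block_weight (S \<union> T) (\<lambda>C. w C + u C) (p \<union> q) B)"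
    by auto
  then show ?thesis
    using True by (simp add: wqshuffle_def all_weights_eq_iff)
qed (simp add: wqshuffle_def)

lemma pclass_restr_lower_ideal: "lower_ideal p S \<Longrightarrow> x \<in> S \<Longrightarrow> pclass (restr p S) x = pclass p x"
  by (auto simp: pclass_def restr_def lower_ideal_def)

lemma pclass_restr_complement:
  assumes li: "lower_ideal p S" and p: "p \<subseteq> (S \<union> T) \<times> (S \<union> T)" and d: "S \<inter> T = {}" and x: "x \<in> T"
  shows "pclass (restr p T) x = pclass p x"
proof -
  have "y \<in> T" if "(x, y) \<in> p" for y
    using that li p d x by (auto simp: lower_ideal_def)
  then show ?thesis
    using x by (auto simp: pclass_def restr_def)
qed

lemma block_weight_restr:
  assumes pre: "preposet I p" and SI: "S \<subseteq> I" and L: "L \<subseteq> S"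
    and cl: "\<And>x. x \<in> S \<Longrightarrow> pclass (restr p S) x = pclass p x"
  shows "block_weight I w p L = block_weight S (wres w S) (restr p S) L"
proof -
  have refl: "x \<in> pclass p x" if "x \<in> I" for x
    using pre that by (simp add: pclass_def preposet_def)
  have "{Q\<in>classes I p. Q \<subseteq> L} = {Q\<in>classes S (restr p S). Q \<subseteq> L}"
  proof (intro subset_antisym subsetI)
    fix Q assume "Q \<in> {Q\<in>classes I p. Q \<subseteq> L}"
    then obtain x where x: "x \<in> I" "Q = pclass p x" "Q \<subseteq> L"
      by (auto simp: classes_def)
    then have "x \<in> S"
      using refl L by auto
    then show "Q \<in> {Q\<in>classes S (restr p S). Q \<subseteq> L}"
      using x cl by (auto simp: classes_def)
  next
    fix Q assume "Q \<in> {Q\<in>classes S (restr p S). Q \<subseteq> L}"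
    then obtain x where x: "x \<in> S" "Q = pclass (restr p S) x" "Q \<subseteq> L"
      by (auto simp: classes_def)
    then show "Q \<in> {Q\<in>classes I p. Q \<subseteq> L}"
      using cl SI by (auto simp: classes_def)
  qed
  then show ?thesis
    unfolding block_weight_def wres_def using L by (intro sum.cong refl) auto
qed

lemma wprelin_ext_append_iff:
  assumes li: "lower_ideal p S" and pre: "preposet (S \<union> T) p" and d: "S \<inter> T = {}"
  shows "(wprelin_ext (S \<union> T) (w, p) (G @ H) \<and> \<Union>(fst ` set G) = S \<and> \<Union>(fst ` set H) = T)
     \<longleftrightarrow> wprelin_ext S (wres w S, restr p S) G \<and> wprelin_ext T (wres w T, restr p T) H"
proof (cases "\<Union>(fst ` set G) = S \<and> \<Union>(fst ` set H) = T")
  case True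
  have p: "p \<subseteq> (S \<union> T) \<times> (S \<union> T)"
    using pre by (simp add: preposet_def)
  have weights_restr: "(\<forall>(L, c)\<in>set X. c = block_weight (S \<union> T) w p L)
      \<longleftrightarrow> (\<forall>(L, c)\<in>set X. c = block_weight R (wres w R) (restr p R) L)"
    if XR: "\<Union>(fst ` set X) = R" and RST: "R \<subseteq> S \<union> T"
      and cl: "\<And>x. x \<in> R \<Longrightarrow> pclass (restr p R) x = pclass p x" for X R
  proof -
    have "block_weight (S \<union> T) w p L = block_weight R (wres w R) (restr p R) L" if "(L, c) \<in> set X" for L c
    proof -
      have "L \<subseteq> R"
        using that XR by force
      then show ?thesis
        using block_weight_restr[OF pre RST _ cl] by blast
    qed
    then show ?thesis by auto
  qed
  have prelin: "prelin_ext (S \<union> T) p (map fst (G @ H))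
      \<longleftrightarrow> prelin_ext S (restr p S) (map fst G) \<and> prelin_ext T (restr p T) (map fst H)"
    using prelin_ext_append_iff[OF li p d, of "map fst G" "map fst H"] True by simp
  have weights: "(\<forall>(L, c)\<in>set (G @ H). c = block_weight (S \<union> T) w p L)
      \<longleftrightarrow> (\<forall>(L, c)\<in>set G. c = block_weight S (wres w S) (restr p S) L)
        \<and> (\<forall>(L, c)\<in>set H. c = block_weight T (wres w T) (restr p T) L)"
    using weights_restr[of G S] weights_restr[of H T] True
      pclass_restr_lower_ideal[OF li] pclass_restr_complement[OF li p d]
    by (simp only: set_append ball_Un) blast
  show ?thesis
    by (simp only: wprelin_ext_block_weight prelin weights True simp_thms conj_ac)
next
  case False
  have "\<Union>(fst ` set G) = S" if "wprelin_ext S (wres w S, restr p S) G"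
    using prelin_ext_Union[of S "restr p S" "map fst G"] that by (simp add: wprelin_ext_block_weight)
  moreover have "\<Union>(fst ` set H) = T" if "wprelin_ext T (wres w T, restr p T) H"
    using prelin_ext_Union[of T "restr p T" "map fst H"] that by (simp add: wprelin_ext_block_weight)
  ultimately show ?thesis
    using False by blast
qed

section \<open>The morphism wst\<close>

lemma wst_transport:
  assumes fI: "finite I" and bij: "bij_betw \<sigma> I J" and wpre: "wpreposet I (w, p)"
  shows "(wst J (wmap \<sigma> I w, map_prod \<sigma> \<sigma> ` p) :: _ \<Rightarrow> 'k::field)
       = lin (\<lambda>F. delta (map (\<lambda>(B, c). (\<sigma> ` B, c)) F)) (wst I (w, p))"
proof -
  let ?r = "\<lambda>(B, c). (\<sigma> ` B, c)"
  have pre: "preposet I p"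
    using wpre by (simp add: wpreposet_def)
  have inj: "inj_on \<sigma> I" and J: "J = \<sigma> ` I"
    using bij by (auto simp: bij_betw_def)
  have p: "p \<subseteq> I \<times> I"
    using pre by (simp add: preposet_def)
  have map_fst_r: "map fst (map ?r H) = map ((`) \<sigma>) (map fst H)" for H :: "('a set \<times> real) list"
    by (induction H) auto
  have inj_r: "inj_on (map ?r) {H. wprelin_ext I (w, p) H}"
  proof (rule inj_onI)
    fix H1 H2 assume H1: "H1 \<in> {H. wprelin_ext I (w, p) H}" and H2: "H2 \<in> {H. wprelin_ext I (w, p) H}"
      and eq: "map ?r H1 = map ?r H2"
    have "map ((`) \<sigma>) (map fst H1) = map ((`) \<sigma>) (map fst H2)"
      using arg_cong[OF eq, of "map fst"] by (simp only: map_fst_r)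
    then have "map fst H1 = map fst H2"
      by (rule inj_onD[OF inj_on_map_image_prelin_ext[OF inj, of p]]) (use H1 H2 in \<open>simp_all add: wprelin_ext_iff\<close>)
    then show "H1 = H2"
      using H1 H2 by (simp add: wprelin_ext_iff)
  qed
  have transport: "{H'. wprelin_ext J (wmap \<sigma> I w, map_prod \<sigma> \<sigma> ` p) H'} = map ?r ` {H. wprelin_ext I (w, p) H}"
  proof -
    have "with_weights (block_weight J (wmap \<sigma> I w) (map_prod \<sigma> \<sigma> ` p)) (map ((`) \<sigma>) F)
        = map ?r (with_weights (block_weight I w p) F)" if "prelin_ext I p F" for F
      using prelin_ext_Union[OF that] block_weight_map_image[OF inj p]
      unfolding with_weights_def J by (auto intro!: map_cong)
    then show ?thesis
      unfolding wprelin_ext_eq_image prelin_ext_transport[OF bij pre] image_image by simp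
  qed
  show ?thesis
    unfolding wst_def
    by (subst lin_delta_inj_on[OF finite_wprelin_ext[OF fI] inj_r]) (simp add: transport[symmetric])
qed

lemma wst_empty: "(wst {} (\<lambda>_. 0, {}) :: ('a set \<times> real) list \<Rightarrow> 'k::{zero,one}) = delta []"
  by (rule ext) (simp add: wst_def delta_def wprelin_ext_block_weight prelin_ext_empty_iff)

lemma wst_Un:
  assumes fS: "finite S" and fT: "finite T" and d: "S \<inter> T = {}"
    and wS: "wpreposet S (w, p)" and wT: "wpreposet T (u, q)"
  shows "(wst (S \<union> T) (\<lambda>C. w C + u C, p \<union> q) :: _ \<Rightarrow> 'k::field)
       = lin2 (wsigmul S T) (wst S (w, p)) (wst T (u, q))"
proof
  fix H :: "('a set \<times> real) list"
  have p: "p \<subseteq> S \<times> S" and q: "q \<subseteq> T \<times> T"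
    using wS wT by (auto simp: wpreposet_def preposet_def)
  let ?A = "{F. prelin_ext S p F}" and ?B = "{G. prelin_ext T q G}"
  let ?WS = "block_weight S w p" and ?WT = "block_weight T u q"
    and ?WU = "block_weight (S \<union> T) (\<lambda>C. w C + u C) (p \<union> q)"
  have "lin2 (wsigmul S T) (wst S (w, p)) (wst T (u, q)) H
      = (\<Sum>F\<in>with_weights ?WS ` ?A. \<Sum>G\<in>with_weights ?WT ` ?B. if wqshuffle S T F G H then (1::'k) else 0)"
    unfolding wst_def lin2_if_one_zero wsigmul_def wprelin_ext_eq_image ..
  also have "\<dots> = (\<Sum>F\<in>?A. \<Sum>G\<in>?B.
      if qshuffle S T F G (map fst H) \<and> H = with_weights ?WU (map fst H) then 1 else 0)"
    by (simp add: sum.reindex inj_on_with_weights wqshuffle_with_block_weight[OF fS fT d wS wT])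
  also have "\<dots> = (if H = with_weights ?WU (map fst H) \<and> prelin_ext (S \<union> T) (p \<union> q) (map fst H) then 1 else 0)"
    using sum_qshuffle_prelin_ext[OF fS fT d p q, of "map fst H", where 'k='k]
    by (cases "H = with_weights ?WU (map fst H)") simp_all
  also have "\<dots> = wst (S \<union> T) (\<lambda>C. w C + u C, p \<union> q) H"
    unfolding wst_def wprelin_ext_iff by auto
  finally show "(wst (S \<union> T) (\<lambda>C. w C + u C, p \<union> q) H :: 'k)
      = lin2 (wsigmul S T) (wst S (w, p)) (wst T (u, q)) H" ..
qed

lemma wst_coproduct:
  assumes fS: "finite S" and fT: "finite T" and d: "S \<inter> T = {}" and wpre: "wpreposet (S \<union> T) (w, p)"
  shows "(lin (wsigcop S T) (wst (S \<union> T) (w, p)) :: _ \<Rightarrow> 'k::field)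
       = lin (\<lambda>(a, b). tens (wst S a) (wst T b)) (wppcop S T (w, p))"
proof
  fix GH :: "('a set \<times> real) list \<times> ('a set \<times> real) list"
  obtain G H where GH: "GH = (G, H)" by (cases GH)
  have pre: "preposet (S \<union> T) p"
    using wpre by (simp add: wpreposet_def)
  have p: "p \<subseteq> (S \<union> T) \<times> (S \<union> T)"
    using pre by (simp add: preposet_def)
  have "lin (wsigcop S T) (wst (S \<union> T) (w, p)) (G, H)
      = (\<Sum>X\<in>{X. wprelin_ext (S \<union> T) (w, p) X}.
           if X = G @ H \<and> (\<Union>(fst ` set G) = S \<and> \<Union>(fst ` set H) = T) then (1::'k) else 0)"
    unfolding wst_def lin_if_one_zero wsigcop_def by simp
  also have "\<dots> = (if wprelin_ext (S \<union> T) (w, p) (G @ H) \<and> \<Union>(fst ` set G) = S \<and> \<Union>(fst ` set H) = T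
                    then 1 else 0)"
    using finite_wprelin_ext[of "S \<union> T" w p] fS fT by (simp add: sum_if_eq_and_one_zero)
  also have "\<dots> = lin (\<lambda>(a, b). tens (wst S a) (wst T b)) (wppcop S T (w, p)) (G, H)"
    using wprelin_ext_append_iff[OF _ pre d, of w G H]
      not_prelin_ext_append[OF _ p d, of "map fst G" "map fst H"]
    by (cases "lower_ideal p S")
      (simp_all add: wppcop_def lin_delta lin_zero tens_def wst_def wprelin_ext_block_weight)
  finally show "(lin (wsigcop S T) (wst (S \<union> T) (w, p)) GH :: 'k)
      = lin (\<lambda>(a, b). tens (wst S a) (wst T b)) (wppcop S T (w, p)) GH"
    using GH by simp
qed

theorem proposition3p5:
  shows
  \<comment> \<open>st : PP -> Sigma*  is a morphism of Hopf monoids\<close>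
  \<comment> \<open>naturality (morphism of species)\<close>
  "(\<forall>(I::'a set) (J::'b set) (\<sigma>::'a \<Rightarrow> 'b) p. finite I \<and> bij_betw \<sigma> I J \<and> preposet I p \<longrightarrow>
      (st J (map_prod \<sigma> \<sigma> ` p) :: 'b set list \<Rightarrow> 'k::field)
        = lin (\<lambda>F. delta (map ((`) \<sigma>) F)) (st I p)) \<and>
   \<comment> \<open>unit\<close>
   (st ({}::'a set) {} :: 'a set list \<Rightarrow> 'k) = delta [] \<and>
   \<comment> \<open>multiplicativity\<close>
   (\<forall>(S::'a set) T p q. finite S \<and> finite T \<and> S \<inter> T = {} \<and> preposet S p \<and> preposet T q \<longrightarrow>
      (st (S \<union> T) (p \<union> q) :: 'a set list \<Rightarrow> 'k) = lin2 (sigmul S T) (st S p) (st T q)) \<and>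
   \<comment> \<open>comultiplicativity\<close>
   (\<forall>(S::'a set) T p. finite S \<and> finite T \<and> S \<inter> T = {} \<and> preposet (S \<union> T) p \<longrightarrow>
      (lin (sigcop S T) (st (S \<union> T) p) :: 'a set list \<times> 'a set list \<Rightarrow> 'k)
        = lin (\<lambda>(a, b). tens (st S a) (st T b)) (ppcop S T p)) \<and>
   \<comment> \<open>st : wPP -> wSigma*  is a morphism of Hopf monoids\<close>
   (\<forall>(I::'a set) (J::'b set) (\<sigma>::'a \<Rightarrow> 'b) w p. finite I \<and> bij_betw \<sigma> I J \<and> wpreposet I (w, p) \<longrightarrow>
      (wst J (wmap \<sigma> I w, map_prod \<sigma> \<sigma> ` p) :: ('b set \<times> real) list \<Rightarrow> 'k)
        = lin (\<lambda>F. delta (map (\<lambda>(B, c). (\<sigma> ` B, c)) F)) (wst I (w, p))) \<and>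
   (wst ({}::'a set) (\<lambda>_. 0, {}) :: ('a set \<times> real) list \<Rightarrow> 'k) = delta [] \<and>
   (\<forall>(S::'a set) T w p u q. finite S \<and> finite T \<and> S \<inter> T = {} \<and> wpreposet S (w, p) \<and> wpreposet T (u, q) \<longrightarrow>
      (wst (S \<union> T) (\<lambda>C. w C + u C, p \<union> q) :: ('a set \<times> real) list \<Rightarrow> 'k)
        = lin2 (wsigmul S T) (wst S (w, p)) (wst T (u, q))) \<and>
   (\<forall>(S::'a set) T w p. finite S \<and> finite T \<and> S \<inter> T = {} \<and> wpreposet (S \<union> T) (w, p) \<longrightarrow>
      (lin (wsigcop S T) (wst (S \<union> T) (w, p)) :: ('a set \<times> real) list \<times> ('a set \<times> real) list \<Rightarrow> 'k)
        = lin (\<lambda>(a, b). tens (wst S a) (wst T b)) (wppcop S T (w, p)))"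
  apply (intro conjI)
  subgoal by (intro allI impI, elim conjE) (rule st_transport; assumption)
  subgoal by (rule st_empty)
  subgoal by (intro allI impI, elim conjE) (rule st_Un; assumption)
  subgoal by (intro allI impI, elim conjE) (rule st_coproduct; assumption)
  subgoal by (intro allI impI, elim conjE) (rule wst_transport; assumption)
  subgoal by (rule wst_empty)
  subgoal by (intro allI impI, elim conjE) (rule wst_Un; assumption)
  subgoal by (intro allI impI, elim conjE) (rule wst_coproduct; assumption)
  done

end
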